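(* Let $n\ge 3$ and let $CH_n$ be the closed Helm graph. Then $$\chi'(CH_n)=\begin{cases}3(n+1) & \text{if } n \text{ is even},\\ 3n+7 & \text{if } n \text{ is odd}.\end{cases}$$
   Context: The closed Helm graph $CH_n$ has vertices $v, v_1,\dots,v_n,u_1,\dots,u_n$; $v_1\dots v_n$ form a cycle, $u_1\dots u_n$ form a cycle (in this order), $v$ is adjacent to every $v_i$, and $u_i$ is adjacent to $v_i$ for each $i$ (i.e. the Helm graph with its pendant vertices joined into an outer cycle). For a proper colouring $c:V(G)\to\{1,\dots,k\}$ (colour $c_i$ identified with $i$), the colouring sum is $\sum_{i=1}^k i\,\theta(c_i)=\sum_v c(v)$, $\theta(c_i)$ the number of vertices of colour $c_i$. The $\chi$-chromatic sum $\chi'(G)$ is the minimum colouring sum over all proper colourings $c:V(G)\to\{1,\dots,\chi(G)\}$, $\chi(G)$ the chromatic number. *)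

theory Defs
  imports Main
begin

definition proper_colouring :: "'a set \<Rightarrow> ('a \<Rightarrow> 'a \<Rightarrow> bool) \<Rightarrow> nat \<Rightarrow> ('a \<Rightarrow> nat) \<Rightarrow> bool" where
  "proper_colouring V E k c \<longleftrightarrow>
     (\<forall>x\<in>V. c x \<in> {1..k}) \<and> (\<forall>x\<in>V. \<forall>y\<in>V. E x y \<longrightarrow> c x \<noteq> c y)"

definition chromatic_number :: "'a set \<Rightarrow> ('a \<Rightarrow> 'a \<Rightarrow> bool) \<Rightarrow> nat" where
  "chromatic_number V E = (LEAST k. \<exists>c. proper_colouring V E k c)"

definition chi_chromatic_sum :: "'a set \<Rightarrow> ('a \<Rightarrow> 'a \<Rightarrow> bool) \<Rightarrow> nat" where
  "chi_chromatic_sum V E =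
     (LEAST s. \<exists>c. proper_colouring V E (chromatic_number V E) c \<and> s = (\<Sum>x\<in>V. c x))"

text \<open>Closed Helm graph CH_n: hub, inner cycle V 0..V (n-1), outer cycle U 0..U (n-1).\<close>
datatype chvert = Hub | V nat | U nat

definition CH_verts :: "nat \<Rightarrow> chvert set" where
  "CH_verts n = {Hub} \<union> V ` {..<n} \<union> U ` {..<n}"

definition CH_adj :: "nat \<Rightarrow> chvert \<Rightarrow> chvert \<Rightarrow> bool" where
  "CH_adj n x y \<longleftrightarrow> x \<noteq> y \<and>
     (\<exists>i<n. {x, y} = {Hub, V i} \<or> {x, y} = {V i, V ((i + 1) mod n)}
           \<or> {x, y} = {U i, U ((i + 1) mod n)} \<or> {x, y} = {V i, U i})"

end

theory Submission
  imports Defs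
begin

text \<open>In a proper colouring of an \<open>n\<close>-cycle every colour class has at most \<open>\<lfloor>n/2\<rfloor>\<close>
  vertices, and an odd cycle needs a third colour. So a cycle coloured from \<open>{a} \<union> [b,\<infinity>)\<close>
  has colour sum at least \<open>n a + (b - a) \<lceil>n/2\<rceil>\<close>, and an odd cycle coloured from
  \<open>{a, b} \<union> [c,\<infinity>)\<close> at least \<open>c - b\<close> more. Applied to the outer cycle and to the inner
  cycle, whose colours avoid the hub's, this gives the lower bound for every hub colour;
  alternating colourings attain it. The chromatic number is 3 for even \<open>n\<close> (the hub and two
  consecutive inner vertices form a triangle) and 4 for odd \<open>n\<close> (the odd inner cycle needs
  three colours besides the hub's).\<close>

lemma chromatic_number_eqI:
  assumes "proper_colouring X E k c" "\<And>k' c'. proper_colouring X E k' c' \<Longrightarrow> k \<le> k'"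
  shows "chromatic_number X E = k"
  unfolding chromatic_number_def
proof (rule Least_equality)
  show "\<exists>c. proper_colouring X E k c"
    using assms(1) by blast
qed (use assms(2) in blast)

lemma chi_chromatic_sum_eqI:
  assumes "chromatic_number X E = k" "proper_colouring X E k c" "sum c X = s"
    "\<And>c'. proper_colouring X E k c' \<Longrightarrow> s \<le> sum c' X"
  shows "chi_chromatic_sum X E = s"
  unfolding chi_chromatic_sum_def assms(1)
proof (rule Least_equality)
  show "\<exists>c. proper_colouring X E k c \<and> s = sum c X"
    using assms(2,3) by blast
qed (use assms(4) in blast)

lemma sum_lessThan_rotate:
  "(\<Sum>i<n. f (Suc i mod n)) = (\<Sum>i<n. f i :: 'a :: comm_monoid_add)"
proof (cases n)
  case (Suc m)
  have "(\<Sum>i<n. f (Suc i mod n)) = (\<Sum>i<m. f (Suc i)) + f 0"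
    by (simp add: Suc)
  also have "\<dots> = (\<Sum>i<n. f i)"
    unfolding Suc sum.lessThan_Suc_shift by (simp add: add.commute)
  finally show ?thesis .
qed simp

lemma odd_cycle_not_2_colourable:
  assumes "odd n" "\<And>i. i < n \<Longrightarrow> f i \<noteq> f (Suc i mod n)"
  shows "\<exists>i<n. f i \<noteq> a \<and> f i \<noteq> b"
proof (rule ccontr)
  assume "\<not> ?thesis"
  then have two: "f i = a \<or> f i = b" if "i < n" for i
    using that by blast
  have alternating: "f i = f 0 \<longleftrightarrow> even i" if "i < n" for i
    using that
  proof (induction i)
    case (Suc i)
    then have "i < n" "0 < n"
      by simp_all
    have "f (Suc i) \<noteq> f i"
      using assms(2)[OF \<open>i < n\<close>] Suc.prems by simp
    moreover have "f i = f 0 \<longleftrightarrow> even i"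
      using Suc.IH \<open>i < n\<close> by blast
    ultimately show ?case
      using two[OF \<open>i < n\<close>] two[OF Suc.prems] two[OF \<open>0 < n\<close>] by (smt (verit) even_Suc)
  qed simp
  have last: "n - 1 < n" "Suc (n - 1) mod n = 0" "even (n - 1)"
    using \<open>odd n\<close> by (auto simp: odd_pos)
  then have "f (n - 1) = f 0"
    using alternating by blast
  moreover have "f (n - 1) \<noteq> f 0"
    using assms(2)[OF last(1)] last(2) by simp
  ultimately show False
    by contradiction
qed

lemma cycle_card_not_eq_ge:
  assumes "\<And>i. i < n \<Longrightarrow> f i \<noteq> f (Suc i mod n)"
  shows "(n + 1) div 2 \<le> card {i. i < n \<and> f i \<noteq> a}"
proof -
  let ?\<chi> = "\<lambda>i. of_bool (f i \<noteq> a) :: nat"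
  have edge: "1 \<le> ?\<chi> i + ?\<chi> (Suc i mod n)" if "i < n" for i
    using assms[OF that] by auto
  have "n \<le> (\<Sum>i<n. ?\<chi> i + ?\<chi> (Suc i mod n))"
    using sum_bounded_below[of "{..<n}" 1 "\<lambda>i. ?\<chi> i + ?\<chi> (Suc i mod n)"] edge by simp
  also have "\<dots> = 2 * (\<Sum>i<n. ?\<chi> i)"
    by (simp add: sum.distrib sum_lessThan_rotate[of ?\<chi>])
  also have "(\<Sum>i<n. ?\<chi> i) = card {i. i < n \<and> f i \<noteq> a}"
    by (simp add: Collect_conj_eq lessThan_def)
  finally show ?thesis
    by linarith
qed

lemma sum_of_bool_weight:
  "(\<Sum>i<n. a + d * of_bool (P i)) = n * a + d * card {i. i < n \<and> P i}"
  by (simp add: sum.distrib sum_distrib_left[symmetric] Collect_conj_eq lessThan_def)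

lemma cycle_sum_ge:
  assumes "\<And>i. i < n \<Longrightarrow> f i \<noteq> f (Suc i mod n)"
    and "\<And>i. i < n \<Longrightarrow> f i = a \<or> b \<le> f i" and "a \<le> b"
  shows "n * a + (b - a) * ((n + 1) div 2) \<le> (\<Sum>i<n. f i)"
proof -
  have "n * a + (b - a) * ((n + 1) div 2) \<le> n * a + (b - a) * card {i. i < n \<and> f i \<noteq> a}"
    using cycle_card_not_eq_ge[of n f, OF assms(1)] by simp
  also have "\<dots> = (\<Sum>i<n. a + (b - a) * of_bool (f i \<noteq> a))"
    by (rule sum_of_bool_weight[symmetric])
  also have "\<dots> \<le> (\<Sum>i<n. f i)"
    using assms(2,3) by (intro sum_mono) auto
  finally show ?thesis .
qed

lemma odd_cycle_sum_ge:
  assumes "odd n" "\<And>i. i < n \<Longrightarrow> f i \<noteq> f (Suc i mod n)"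
    and "\<And>i. i < n \<Longrightarrow> f i = a \<or> f i = b \<or> c \<le> f i" and "a \<le> b" "b \<le> c"
  shows "n * a + (b - a) * ((n + 1) div 2) + (c - b) \<le> (\<Sum>i<n. f i)"
proof -
  obtain j where j: "j < n" "c \<le> f j"
    using odd_cycle_not_2_colourable[of n f, OF assms(1,2), of a b] assms(3) by blast
  have "n * a + (b - a) * ((n + 1) div 2) + (c - b)
      \<le> n * a + (b - a) * card {i. i < n \<and> f i \<noteq> a} + (c - b)"
    using cycle_card_not_eq_ge[of n f, OF assms(2)] by simp
  also have "\<dots> = (\<Sum>i<n. a + (b - a) * of_bool (f i \<noteq> a)) + (\<Sum>i<n. (c - b) * of_bool (i = j))"
    using j(1) by (simp add: sum_of_bool_weight)
  also have "\<dots> \<le> (\<Sum>i<n. f i)"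
  proof (unfold sum.distrib[symmetric], intro sum_mono)
    fix i assume "i \<in> {..<n}"
    then show "a + (b - a) * of_bool (f i \<noteq> a) + (c - b) * of_bool (i = j) \<le> f i"
      using assms(3)[of i] assms(4,5) j by (cases "i = j") auto
  qed
  finally show ?thesis .
qed

lemma proper_colouring_CHD:
  assumes "proper_colouring (CH_verts n) (CH_adj n) k c" "2 \<le> n"
  shows "c Hub \<in> {1..k}"
    and "i < n \<Longrightarrow> c (V i) \<in> {1..k}" "i < n \<Longrightarrow> c (U i) \<in> {1..k}"
    and "i < n \<Longrightarrow> c Hub \<noteq> c (V i)" "i < n \<Longrightarrow> c (V i) \<noteq> c (U i)"
    and "i < n \<Longrightarrow> c (V i) \<noteq> c (V (Suc i mod n))"
    and "i < n \<Longrightarrow> c (U i) \<noteq> c (U (Suc i mod n))"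
proof -
  have col: "c x \<in> {1..k}" if "x \<in> CH_verts n" for x
    using assms(1) that unfolding proper_colouring_def by blast
  have adj: "c x \<noteq> c y" if "x \<in> CH_verts n" "y \<in> CH_verts n" "CH_adj n x y" for x y
    using assms(1) that unfolding proper_colouring_def by blast
  have succ_ne: "Suc i mod n \<noteq> i" if "i < n" for i
    using assms(2) that by (auto simp: mod_Suc)
  have edge: "CH_adj n Hub (V i)" "CH_adj n (V i) (U i)"
    "CH_adj n (V i) (V (Suc i mod n))" "CH_adj n (U i) (U (Suc i mod n))" if "i < n" for i
    using that succ_ne[OF that] succ_ne[OF that, THEN not_sym] unfolding CH_adj_def by auto
  show "c Hub \<in> {1..k}"
    by (rule col) (simp add: CH_verts_def)
  show "c (V i) \<in> {1..k}" "c (U i) \<in> {1..k}" if "i < n"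
    using that by (intro col; simp add: CH_verts_def)+
  show "c Hub \<noteq> c (V i)" "c (V i) \<noteq> c (U i)"
    "c (V i) \<noteq> c (V (Suc i mod n))" "c (U i) \<noteq> c (U (Suc i mod n))" if "i < n"
    by (intro adj edge that; use that in \<open>simp add: CH_verts_def\<close>)+
qed

lemma proper_colouring_CHI:
  assumes "c Hub \<in> {1..k}"
    and "\<forall>i<n. c (V i) \<in> {1..k} \<and> c (U i) \<in> {1..k} \<and> c Hub \<noteq> c (V i) \<and> c (V i) \<noteq> c (U i) \<and>
      c (V i) \<noteq> c (V (Suc i mod n)) \<and> c (U i) \<noteq> c (U (Suc i mod n))"
  shows "proper_colouring (CH_verts n) (CH_adj n) k c"
  unfolding proper_colouring_def CH_adj_def
  using assms by (auto simp: CH_verts_def doubleton_eq_iff)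

lemma sum_CH_verts:
  "sum c (CH_verts n) = c Hub + (\<Sum>i<n. c (V i)) + (\<Sum>i<n. c (U i))"
proof -
  have verts: "CH_verts n = insert Hub (V ` {..<n} \<union> U ` {..<n})"
    by (auto simp: CH_verts_def)
  have "sum c (V ` {..<n} \<union> U ` {..<n}) = sum c (V ` {..<n}) + sum c (U ` {..<n})"
    by (rule sum.union_disjoint) auto
  also have "sum c (V ` {..<n}) = (\<Sum>i<n. c (V i))"
    by (subst sum.reindex) (auto simp: inj_on_def)
  also have "sum c (U ` {..<n}) = (\<Sum>i<n. c (U i))"
    by (subst sum.reindex) (auto simp: inj_on_def)
  finally show ?thesis
    unfolding verts by (subst sum.insert) (auto simp: add.assoc)
qed

lemma CH_colours_ge_3:
  assumes "proper_colouring (CH_verts n) (CH_adj n) k c" "2 \<le> n"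
  shows "3 \<le> k"
proof -
  note proper = proper_colouring_CHD[OF assms]
  have "0 < n" "1 < n" "Suc 0 mod n = 1"
    using assms(2) by simp_all
  then have "c Hub \<noteq> c (V 0)" "c Hub \<noteq> c (V 1)" "c (V 0) \<noteq> c (V 1)"
    "c Hub \<in> {1..k}" "c (V 0) \<in> {1..k}" "c (V 1) \<in> {1..k}"
    using proper(1,2,4,6) by metis+
  then show ?thesis
    by auto
qed

lemma odd_CH_colours_ge_4:
  assumes "proper_colouring (CH_verts n) (CH_adj n) k c" "3 \<le> n" "odd n"
  shows "4 \<le> k"
proof (rule ccontr)
  assume "\<not> 4 \<le> k"
  have "2 \<le> n"
    using assms(2) by simp
  note proper = proper_colouring_CHD[OF assms(1) this]
  \<comment> \<open>the colours in {1,2,3} other than the hub's\<close>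
  define a where "a = (if c Hub = 1 then 2 else 1 :: nat)"
  define b where "b = (if c Hub = 3 then 2 else 3 :: nat)"
  obtain i where i: "i < n" "c (V i) \<noteq> a" "c (V i) \<noteq> b"
    using odd_cycle_not_2_colourable[of n "\<lambda>i. c (V i)", OF assms(3) proper(6)] by blast
  with proper(1) proper(2,4)[OF i(1)] \<open>\<not> 4 \<le> k\<close> show False
    unfolding a_def b_def by (auto split: if_splits)
qed

definition CH_colouring_even :: "chvert \<Rightarrow> nat" where
  "CH_colouring_even x =
     (case x of Hub \<Rightarrow> 3 | V i \<Rightarrow> if even i then 1 else 2 | U i \<Rightarrow> if even i then 2 else 1)"

definition CH_colouring_odd :: "nat \<Rightarrow> chvert \<Rightarrow> nat" where
  "CH_colouring_odd n x =
     (case x of Hub \<Rightarrow> 4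
      | V i \<Rightarrow> if i = n - 1 then 3 else if even i then 1 else 2
      | U i \<Rightarrow> if i = 0 then 3 else if even i then 2 else 1)"

lemma Suc_mod_if: "i < n \<Longrightarrow> Suc i mod n = (if Suc i = n then 0 else Suc i)"
  by auto

lemma proper_CH_colouring_even:
  assumes "even n"
  shows "proper_colouring (CH_verts n) (CH_adj n) 3 CH_colouring_even"
  by (rule proper_colouring_CHI) (use assms in \<open>auto simp: CH_colouring_even_def Suc_mod_if\<close>)

lemma proper_CH_colouring_odd:
  assumes "odd n" "3 \<le> n"
  shows "proper_colouring (CH_verts n) (CH_adj n) 4 (CH_colouring_odd n)"
  by (rule proper_colouring_CHI) (use assms in \<open>auto simp: CH_colouring_odd_def Suc_mod_if\<close>)

lemma sum_alternating: "(\<Sum>i<2 * m. if even i then x else y) = m * (x + y :: nat)"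
  by (induction m) (auto simp: mult_2)

lemma sum_CH_colouring_even:
  assumes "even n"
  shows "sum CH_colouring_even (CH_verts n) = 3 * (n + 1)"
proof -
  obtain m where n: "n = 2 * m"
    using assms by blast
  show ?thesis
    unfolding sum_CH_verts by (simp add: CH_colouring_even_def n sum_alternating)
qed

lemma sum_CH_colouring_odd:
  assumes "odd n"
  shows "sum (CH_colouring_odd n) (CH_verts n) = 3 * n + 7"
proof -
  obtain m where n: "n = Suc (2 * m)"
    using assms by (metis oddE Suc_eq_plus1)
  have "(\<Sum>i<n. CH_colouring_odd n (V i)) = (\<Sum>i<2 * m. if even i then 1 else 2) + 3"
    by (simp add: n CH_colouring_odd_def)
  moreover have "(\<Sum>i<n. CH_colouring_odd n (U i)) = 3 + (\<Sum>i<2 * m. if even i then 1 else 2)"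
    unfolding n sum.lessThan_Suc_shift by (auto simp: CH_colouring_odd_def intro!: sum.cong)
  ultimately show ?thesis
    unfolding sum_CH_verts by (simp add: CH_colouring_odd_def n sum_alternating)
qed

lemma even_CH_hub_inner_sum_ge:
  assumes "proper_colouring (CH_verts n) (CH_adj n) 3 c" "3 \<le> n" "even n"
  shows "3 * n + 6 \<le> 2 * (c Hub + (\<Sum>i<n. c (V i)))"
proof -
  obtain m where n: "n = 2 * m"
    using assms(3) by blast
  have "2 \<le> n"
    using assms(2) by simp
  note proper = proper_colouring_CHD[OF assms(1) this]
  have "c Hub \<in> {1, 2, 3}"
    using proper(1) by auto
  then show ?thesis
  proof (elim insertE emptyE)
    assume hub: "c Hub = 1"
    then have "c (V i) = 2 \<or> 3 \<le> c (V i)" if "i < n" for i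
      using proper(2,4)[OF that] by auto
    from cycle_sum_ge[of n "\<lambda>i. c (V i)", OF proper(6) this] show ?thesis
      using hub assms(2) by (simp add: n)
  next
    assume hub: "c Hub = 2"
    then have "c (V i) = 1 \<or> 3 \<le> c (V i)" if "i < n" for i
      using proper(2,4)[OF that] by auto
    from cycle_sum_ge[of n "\<lambda>i. c (V i)", OF proper(6) this] show ?thesis
      using hub assms(2) by (simp add: n)
  next
    assume hub: "c Hub = 3"
    then have "c (V i) = 1 \<or> 2 \<le> c (V i)" if "i < n" for i
      using proper(2,4)[OF that] by auto
    from cycle_sum_ge[of n "\<lambda>i. c (V i)", OF proper(6) this] show ?thesis
      using hub by (simp add: n)
  qed
qed

lemma even_CH_colour_sum_ge:
  assumes "proper_colouring (CH_verts n) (CH_adj n) 3 c" "3 \<le> n" "even n"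
  shows "3 * (n + 1) \<le> sum c (CH_verts n)"
proof -
  have "2 \<le> n"
    using assms(2) by simp
  note proper = proper_colouring_CHD[OF assms(1) this]
  have "c (U i) = 1 \<or> 2 \<le> c (U i)" if "i < n" for i
    using proper(3)[OF that] by auto
  from cycle_sum_ge[of n "\<lambda>i. c (U i)", OF proper(7) this] assms(3)
  have "3 * n \<le> 2 * (\<Sum>i<n. c (U i))"
    by (auto elim: evenE)
  with even_CH_hub_inner_sum_ge[OF assms] show ?thesis
    unfolding sum_CH_verts by (simp add: distrib_left)
qed

lemma odd_CH_hub_inner_sum_ge:
  assumes "proper_colouring (CH_verts n) (CH_adj n) 4 c" "3 \<le> n" "odd n"
  shows "3 * n + 11 \<le> 2 * (c Hub + (\<Sum>i<n. c (V i)))"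
proof -
  obtain m where n: "n = 2 * m + 1"
    using assms(3) oddE by blast
  have "2 \<le> n"
    using assms(2) by simp
  note proper = proper_colouring_CHD[OF assms(1) this]
  have "c Hub \<in> {1, 2, 3, 4}"
    using proper(1) by auto
  then show ?thesis
  proof (elim insertE emptyE)
    assume hub: "c Hub = 1"
    then have "c (V i) = 2 \<or> c (V i) = 3 \<or> 4 \<le> c (V i)" if "i < n" for i
      using proper(2,4)[OF that] by auto
    from odd_cycle_sum_ge[of n "\<lambda>i. c (V i)", OF assms(3) proper(6) this] show ?thesis
      using hub assms(2) by (simp add: n)
  next
    assume hub: "c Hub = 2"
    then have "c (V i) = 1 \<or> c (V i) = 3 \<or> 4 \<le> c (V i)" if "i < n" for i
      using proper(2,4)[OF that] by auto
    from odd_cycle_sum_ge[of n "\<lambda>i. c (V i)", OF assms(3) proper(6) this] show ?thesis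
      using hub assms(2) by (simp add: n)
  next
    assume hub: "c Hub = 3"
    then have "c (V i) = 1 \<or> c (V i) = 2 \<or> 4 \<le> c (V i)" if "i < n" for i
      using proper(2,4)[OF that] by auto
    from odd_cycle_sum_ge[of n "\<lambda>i. c (V i)", OF assms(3) proper(6) this] show ?thesis
      using hub by (simp add: n)
  next
    assume hub: "c Hub = 4"
    then have "c (V i) = 1 \<or> c (V i) = 2 \<or> 3 \<le> c (V i)" if "i < n" for i
      using proper(2,4)[OF that] by auto
    from odd_cycle_sum_ge[of n "\<lambda>i. c (V i)", OF assms(3) proper(6) this] show ?thesis
      using hub by (simp add: n)
  qed
qed

lemma odd_CH_colour_sum_ge:
  assumes "proper_colouring (CH_verts n) (CH_adj n) 4 c" "3 \<le> n" "odd n"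
  shows "3 * n + 7 \<le> sum c (CH_verts n)"
proof -
  have "2 \<le> n"
    using assms(2) by simp
  note proper = proper_colouring_CHD[OF assms(1) this]
  have "c (U i) = 1 \<or> c (U i) = 2 \<or> 3 \<le> c (U i)" if "i < n" for i
    using proper(3)[OF that] by auto
  from odd_cycle_sum_ge[of n "\<lambda>i. c (U i)", OF assms(3) proper(7) this] assms(3)
  have "3 * n + 3 \<le> 2 * (\<Sum>i<n. c (U i))"
    by (auto elim: oddE)
  with odd_CH_hub_inner_sum_ge[OF assms] show ?thesis
    unfolding sum_CH_verts by (simp add: distrib_left)
qed

theorem theorem2p9:
  fixes n :: nat
  assumes "n \<ge> 3"
  shows "chi_chromatic_sum (CH_verts n) (CH_adj n) = (if even n then 3 * (n + 1) else 3 * n + 7)"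
proof (cases "even n")
  case True
  have "chromatic_number (CH_verts n) (CH_adj n) = 3"
    using proper_CH_colouring_even[OF True] CH_colours_ge_3 assms
    by (intro chromatic_number_eqI) auto
  then have "chi_chromatic_sum (CH_verts n) (CH_adj n) = 3 * (n + 1)"
    using proper_CH_colouring_even[OF True] sum_CH_colouring_even[OF True]
      even_CH_colour_sum_ge[OF _ assms True]
    by (rule chi_chromatic_sum_eqI)
  with True show ?thesis
    by simp
next
  case False
  have "chromatic_number (CH_verts n) (CH_adj n) = 4"
    using proper_CH_colouring_odd[OF False assms] odd_CH_colours_ge_4 assms False
    by (intro chromatic_number_eqI) auto
  then have "chi_chromatic_sum (CH_verts n) (CH_adj n) = 3 * n + 7"
    using proper_CH_colouring_odd[OF False assms] sum_CH_colouring_odd[OF False]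
      odd_CH_colour_sum_ge[OF _ assms False]
    by (rule chi_chromatic_sum_eqI)
  with False show ?thesis
    by simp
qed

end
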